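(* Let $A$ be a unital $C^*$-algebra and $a\in A$. Then $a$ is self-adjoint if and only if $\rho(a^*,a)=0$ and $\sup_{n\in\mathbb Z}\|e^{ina}\|<+\infty$.
   Context: For $a,b\in A$ and $n\geq 0$ put $C_{a,b}^n\mathbf 1=\sum_{k=0}^n(-1)^k\binom{n}{k}a^{n-k}b^k$ (with $a^0=b^0=\mathbf 1$), and $\rho(a,b)=\limsup_{n\to\infty}\|C_{a,b}^n\mathbf 1\|^{1/n}$. *)

theory Defs
  imports Complex_Main "HOL-Library.Extended_Real" "HOL-Library.Liminf_Limsup"
begin

text \<open>Complex scalar multiplication is cscale, compatible with the
  real scaling scaleR inherited from the real normed algebra structure.\<close>

class cstar_algebra_1 = real_normed_algebra_1 + banach +
  fixes cscale :: "complex \<Rightarrow> 'a \<Rightarrow> 'a"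
    and adj :: "'a \<Rightarrow> 'a"
  assumes cscale_add_right: "cscale c (x + y) = cscale c x + cscale c y"
    and cscale_add_left: "cscale (c + d) x = cscale c x + cscale d x"
    and cscale_cscale: "cscale c (cscale d x) = cscale (c * d) x"
    and cscale_one: "cscale 1 x = x"
    and cscale_of_real: "cscale (complex_of_real r) x = scaleR r x"
    and cscale_mult_left: "cscale c x * y = cscale c (x * y)"
    and cscale_mult_right: "x * cscale c y = cscale c (x * y)"
    and norm_cscale: "norm (cscale c x) = cmod c * norm x"
    and adj_adj: "adj (adj x) = x"
    and adj_add: "adj (x + y) = adj x + adj y"
    and adj_cscale: "adj (cscale c x) = cscale (cnj c) (adj x)"
    and adj_mult: "adj (x * y) = adj y * adj x"
    and cstar_identity: "norm (adj x * x) = (norm x)\<^sup>2"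

definition Cpow_one :: "'a::cstar_algebra_1 \<Rightarrow> 'a \<Rightarrow> nat \<Rightarrow> 'a" where
  "Cpow_one a b n = (\<Sum>k\<le>n. ((-1) ^ k * of_nat (n choose k)) *\<^sub>R (a ^ (n - k) * b ^ k))"

definition rho :: "'a::cstar_algebra_1 \<Rightarrow> 'a \<Rightarrow> ereal" where
  "rho a b = limsup (\<lambda>n. ereal (root n (norm (Cpow_one a b n))))"

end

theory Submission
  imports Defs "HOL-Complex_Analysis.Complex_Analysis" "HOL-Real_Asymp.Real_Asymp"
begin

text \<open>If \<open>a* = a\<close>, then \<open>C\<^sup>n\<^sub>a\<^sub>,\<^sub>a 1 = (a - a)\<^sup>n = 0\<close> for \<open>n \<ge> 1\<close> and every \<open>e\<^sup>i\<^sup>t\<^sup>a\<close> is unitary.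
  Conversely, for a bounded complex-linear functional \<open>\<psi>\<close> the function
  \<open>g z = \<psi>(e\<^sup>z\<^sup>a\<^sup>* e\<^sup>-\<^sup>z\<^sup>a) = \<Sum>\<^sub>n \<psi>(C\<^sup>n\<^sub>a\<^sub>*\<^sub>,\<^sub>a 1) z\<^sup>n / n!\<close> is entire, and \<open>\<rho>(a*, a) = 0\<close> makes it
  of exponential type zero.  On the imaginary axis \<open>e\<^sup>i\<^sup>t\<^sup>a\<^sup>* e\<^sup>-\<^sup>i\<^sup>t\<^sup>a = u* u\<close> with \<open>u = e\<^sup>-\<^sup>i\<^sup>t\<^sup>a\<close>,
  so the bound on the \<open>e\<^sup>i\<^sup>n\<^sup>a\<close> bounds \<open>g\<close> there.  By Phragmen-Lindelof an entire function of
  exponential type zero that is bounded on a line is constant, so \<open>\<psi>(a* - a) = g'(0) = 0\<close>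
  for every \<open>\<psi>\<close>, and Hahn-Banach gives \<open>a* = a\<close>.\<close>

section \<open>A norming functional\<close>

text \<open>Graphs of norm-dominated linear functionals on subspaces, normalised at \<open>d\<close>. Zorn's lemma
  gives a maximal one, and maximality forces it to be defined everywhere.\<close>

definition norming_graph :: "'a::real_normed_vector \<Rightarrow> ('a \<times> real) set \<Rightarrow> bool" where
  "norming_graph d G \<longleftrightarrow> (\<forall>x a b. (x, a) \<in> G \<longrightarrow> (x, b) \<in> G \<longrightarrow> a = b) \<and>
     (\<forall>x a y b. (x, a) \<in> G \<longrightarrow> (y, b) \<in> G \<longrightarrow> (x + y, a + b) \<in> G) \<and>
     (\<forall>x a r. (x, a) \<in> G \<longrightarrow> (r *\<^sub>R x, r * a) \<in> G) \<and>
     (\<forall>x a. (x, a) \<in> G \<longrightarrow> a \<le> norm x) \<and> (d, norm d) \<in> G"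

lemma norming_graph_line: "norming_graph d {(t *\<^sub>R d, t * norm d) | t. True}"
  (is "norming_graph d ?L")
  unfolding norming_graph_def
proof (intro conjI allI impI)
  fix x a b assume "(x, a) \<in> ?L" "(x, b) \<in> ?L"
  then obtain t s where "x = t *\<^sub>R d" "a = t * norm d" "x = s *\<^sub>R d" "b = s * norm d" by blast
  then show "a = b" by (cases "d = 0") auto
next
  fix x a y b assume "(x, a) \<in> ?L" "(y, b) \<in> ?L"
  then obtain t s where "x = t *\<^sub>R d" "a = t * norm d" "y = s *\<^sub>R d" "b = s * norm d" by blast
  then have "(x + y, a + b) = ((t + s) *\<^sub>R d, (t + s) * norm d)" by (simp add: algebra_simps)
  then show "(x + y, a + b) \<in> ?L" by blast
next
  fix x a r assume "(x, a) \<in> ?L"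
  then obtain t where "x = t *\<^sub>R d" "a = t * norm d" by blast
  then have "(r *\<^sub>R x, r * a) = ((r * t) *\<^sub>R d, (r * t) * norm d)" by simp
  then show "(r *\<^sub>R x, r * a) \<in> ?L" by blast
next
  fix x a assume "(x, a) \<in> ?L"
  then show "a \<le> norm x" by (auto simp: mult_right_mono)
next
  show "(d, norm d) \<in> ?L"
    by (rule CollectI, rule exI[of _ 1]) simp
qed

lemma norming_graph_Union_chain:
  assumes C: "C \<in> chains {G. norming_graph d G}" and "C \<noteq> {}"
  shows "norming_graph d (\<Union>C)"
proof -
  have good: "\<And>G. G \<in> C \<Longrightarrow> norming_graph d G"
    using C unfolding chains_def by auto
  have common: "\<exists>G\<in>C. p \<in> G \<and> q \<in> G" if pq: "p \<in> \<Union>C" "q \<in> \<Union>C" for p q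
  proof -
    obtain G H where "G \<in> C" "H \<in> C" "p \<in> G" "q \<in> H" using pq by blast
    then show ?thesis using C unfolding chains_def chain_subset_def by blast
  qed
  show ?thesis unfolding norming_graph_def
  proof (intro conjI allI impI)
    fix x a b assume "(x, a) \<in> \<Union>C" "(x, b) \<in> \<Union>C"
    then obtain G where "G \<in> C" "(x, a) \<in> G" "(x, b) \<in> G" using common by blast
    then show "a = b" using good[of G] unfolding norming_graph_def by blast
  next
    fix x a y b assume "(x, a) \<in> \<Union>C" "(y, b) \<in> \<Union>C"
    then obtain G where "G \<in> C" "(x, a) \<in> G" "(y, b) \<in> G" using common by blast
    then show "(x + y, a + b) \<in> \<Union>C" using good[of G] unfolding norming_graph_def by blast
  next
    fix x a r assume "(x, a) \<in> \<Union>C"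
    then show "(r *\<^sub>R x, r * a) \<in> \<Union>C" using good unfolding norming_graph_def by blast
  next
    fix x a assume "(x, a) \<in> \<Union>C"
    then show "a \<le> norm x" using good unfolding norming_graph_def by blast
  next
    show "(d, norm d) \<in> \<Union>C" using good \<open>C \<noteq> {}\<close> unfolding norming_graph_def by blast
  qed
qed

lemma norming_graph_zero: "norming_graph d M \<Longrightarrow> (0, 0) \<in> M"
  unfolding norming_graph_def by (metis mult_zero_left scaleR_zero_left)

text \<open>The classical choice of the value \<open>c\<close> at a new vector \<open>w\<close>: every \<open>a - \<parallel>x - w\<parallel>\<close> lies below
  every \<open>\<parallel>y + w\<parallel> - b\<close> by the triangle inequality, so a supremum fits in between.\<close>

lemma norming_graph_separating_value:
  assumes M: "norming_graph d M"
  obtains c where "\<And>x a. (x, a) \<in> M \<Longrightarrow> a - norm (x - w) \<le> c"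
    and "\<And>y b. (y, b) \<in> M \<Longrightarrow> c \<le> norm (y + w) - b"
proof -
  have add: "\<And>x a y b. (x, a) \<in> M \<Longrightarrow> (y, b) \<in> M \<Longrightarrow> (x + y, a + b) \<in> M"
    and bound: "\<And>x a. (x, a) \<in> M \<Longrightarrow> a \<le> norm x"
    using M unfolding norming_graph_def by blast+
  have zero: "(0, 0) \<in> M" using M by (rule norming_graph_zero)
  define S where "S = {a - norm (x - w) | x a. (x, a) \<in> M}"
  have below: "s \<le> norm (y + w) - b" if "s \<in> S" "(y, b) \<in> M" for s y b
  proof -
    obtain x a where s: "s = a - norm (x - w)" and xa: "(x, a) \<in> M"
      using \<open>s \<in> S\<close> unfolding S_def by blast
    have "a + b \<le> norm ((x - w) + (y + w))" using bound[OF add[OF xa that(2)]] by simp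
    also have "\<dots> \<le> norm (x - w) + norm (y + w)" by (rule norm_triangle_ineq)
    finally show ?thesis using s by simp
  qed
  have "S \<noteq> {}" using zero by (auto simp: S_def)
  have "bdd_above S" using below zero unfolding bdd_above_def by blast
  show thesis
  proof
    show "a - norm (x - w) \<le> Sup S" if "(x, a) \<in> M" for x a
      using \<open>bdd_above S\<close> that by (intro cSup_upper) (auto simp: S_def)
    show "Sup S \<le> norm (y + w) - b" if "(y, b) \<in> M" for y b
      using \<open>S \<noteq> {}\<close> below that by (intro cSup_least) auto
  qed
qed

lemma norming_graph_extension_value:
  assumes M: "norming_graph d M"
  obtains c where "\<And>x a t. (x, a) \<in> M \<Longrightarrow> a + t * c \<le> norm (x + t *\<^sub>R w)"
proof -
  have scale: "\<And>x a r. (x, a) \<in> M \<Longrightarrow> (r *\<^sub>R x, r * a) \<in> M"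
    and bound: "\<And>x a. (x, a) \<in> M \<Longrightarrow> a \<le> norm x"
    using M unfolding norming_graph_def by blast+
  obtain c where c_ge: "\<And>x a. (x, a) \<in> M \<Longrightarrow> a - norm (x - w) \<le> c"
    and c_le: "\<And>y b. (y, b) \<in> M \<Longrightarrow> c \<le> norm (y + w) - b"
    using norming_graph_separating_value[OF M] by blast
  show thesis
  proof
    fix x a and t :: real assume xa: "(x, a) \<in> M"
    consider "t = 0" | "t > 0" | "t < 0" by linarith
    then show "a + t * c \<le> norm (x + t *\<^sub>R w)"
    proof cases
      case 1
      then show ?thesis using bound[OF xa] by simp
    next
      case 2
      have "c \<le> norm ((1 / t) *\<^sub>R x + w) - (1 / t) * a" using c_le[OF scale[OF xa]] .
      also have "(1 / t) *\<^sub>R x + w = (1 / t) *\<^sub>R (x + t *\<^sub>R w)" using 2 by (simp add: algebra_simps)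
      finally have "c \<le> norm (x + t *\<^sub>R w) / t - a / t" using 2 by simp
      then show ?thesis using 2 by (simp add: field_simps)
    next
      case 3
      have "(1 / - t) * a - norm ((1 / - t) *\<^sub>R x - w) \<le> c" using c_ge[OF scale[OF xa]] .
      also have "(1 / - t) *\<^sub>R x - w = (1 / - t) *\<^sub>R (x + t *\<^sub>R w)" using 3 by (simp add: algebra_simps)
      finally have "a / - t - norm (x + t *\<^sub>R w) / - t \<le> c" using 3 by simp
      then show ?thesis using 3 by (simp add: field_simps)
    qed
  qed
qed

lemma norming_graph_extend:
  assumes M: "norming_graph d M" and w: "\<forall>a. (w, a) \<notin> M"
    and c: "\<And>x a t. (x, a) \<in> M \<Longrightarrow> a + t * c \<le> norm (x + t *\<^sub>R w)"
  shows "norming_graph d {(x + t *\<^sub>R w, a + t * c) | x a t. (x, a) \<in> M}"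
    (is "norming_graph d ?M'")
proof -
  have unique: "\<And>x a b. (x, a) \<in> M \<Longrightarrow> (x, b) \<in> M \<Longrightarrow> a = b"
    and add: "\<And>x a y b. (x, a) \<in> M \<Longrightarrow> (y, b) \<in> M \<Longrightarrow> (x + y, a + b) \<in> M"
    and scale: "\<And>x a r. (x, a) \<in> M \<Longrightarrow> (r *\<^sub>R x, r * a) \<in> M"
    and dM: "(d, norm d) \<in> M"
    using M unfolding norming_graph_def by blast+
  show ?thesis unfolding norming_graph_def
  proof (intro conjI allI impI)
    fix x a b assume "(x, a) \<in> ?M'" "(x, b) \<in> ?M'"
    then obtain x1 a1 t1 x2 a2 t2
      where e1: "x = x1 + t1 *\<^sub>R w" "a = a1 + t1 * c" "(x1, a1) \<in> M"
        and e2: "x = x2 + t2 *\<^sub>R w" "b = a2 + t2 * c" "(x2, a2) \<in> M"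
      by blast
    have "t1 = t2"
    proof (rule ccontr)
      assume "t1 \<noteq> t2"
      have "x1 - x2 = (t2 - t1) *\<^sub>R w" using e1(1) e2(1) by (simp add: algebra_simps)
      then have "w = (1 / (t2 - t1)) *\<^sub>R (x1 - x2)" using \<open>t1 \<noteq> t2\<close> by simp
      moreover have "(x1 - x2, a1 - a2) \<in> M" using add[OF e1(3) scale[OF e2(3), of "-1"]] by simp
      ultimately have "(w, (1 / (t2 - t1)) * (a1 - a2)) \<in> M" using scale by metis
      then show False using w by blast
    qed
    then have "x1 = x2" using e1(1) e2(1) by simp
    then show "a = b" using unique e1 e2 \<open>t1 = t2\<close> by blast
  next
    fix x a y b assume "(x, a) \<in> ?M'" "(y, b) \<in> ?M'"
    then obtain x1 a1 t1 x2 a2 t2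
      where e1: "x = x1 + t1 *\<^sub>R w" "a = a1 + t1 * c" "(x1, a1) \<in> M"
        and e2: "y = x2 + t2 *\<^sub>R w" "b = a2 + t2 * c" "(x2, a2) \<in> M"
      by blast
    have "x + y = (x1 + x2) + (t1 + t2) *\<^sub>R w" "a + b = (a1 + a2) + (t1 + t2) * c"
      using e1 e2 by (simp_all add: algebra_simps)
    then show "(x + y, a + b) \<in> ?M'" using add[OF e1(3) e2(3)] by blast
  next
    fix x a r assume "(x, a) \<in> ?M'"
    then obtain x1 a1 t where e: "x = x1 + t *\<^sub>R w" "a = a1 + t * c" "(x1, a1) \<in> M"
      by blast
    have "r *\<^sub>R x = r *\<^sub>R x1 + (r * t) *\<^sub>R w" "r * a = r * a1 + (r * t) * c"
      using e by (simp_all add: algebra_simps)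
    then show "(r *\<^sub>R x, r * a) \<in> ?M'" using scale[OF e(3)] by blast
  next
    fix x a assume "(x, a) \<in> ?M'"
    then show "a \<le> norm x" using c by blast
  next
    have "(d, norm d) = (d + 0 *\<^sub>R w, norm d + 0 * c)" by simp
    then show "(d, norm d) \<in> ?M'" using dM by blast
  qed
qed

lemma maximal_norming_graph_total:
  assumes M: "norming_graph d M"
    and maximal: "\<And>X. norming_graph d X \<Longrightarrow> M \<subseteq> X \<Longrightarrow> X = M"
  shows "\<exists>a. (w, a) \<in> M"
proof (rule ccontr)
  assume w: "\<nexists>a. (w, a) \<in> M"
  obtain c where c: "\<And>x a t. (x, a) \<in> M \<Longrightarrow> a + t * c \<le> norm (x + t *\<^sub>R w)"
    using norming_graph_extension_value[OF M] by blast
  define M' where "M' = {(x + t *\<^sub>R w, a + t * c) | x a t. (x, a) \<in> M}"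
  have "norming_graph d M'" unfolding M'_def using norming_graph_extend[OF M _ c] w by blast
  moreover have "M \<subseteq> M'"
  proof clarify
    fix x a assume "(x, a) \<in> M"
    moreover have "(x, a) = (x + 0 *\<^sub>R w, a + 0 * c)" by simp
    ultimately show "(x, a) \<in> M'" unfolding M'_def by blast
  qed
  moreover have "(w, c) \<in> M'"
  proof -
    have "(0, 0) \<in> M" using M by (rule norming_graph_zero)
    moreover have "(w, c) = (0 + 1 *\<^sub>R w, 0 + 1 * c)" by simp
    ultimately show ?thesis unfolding M'_def by blast
  qed
  ultimately show False using maximal w by blast
qed

lemma norming_functional_exists:
  fixes d :: "'a::real_normed_vector"
  obtains \<phi> :: "'a \<Rightarrow> real" where "linear \<phi>" "\<And>x. \<bar>\<phi> x\<bar> \<le> norm x" "\<phi> d = norm d"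
proof -
  have "\<forall>C\<in>chains {G. norming_graph d G}. \<exists>U\<in>{G. norming_graph d G}. \<forall>X\<in>C. X \<subseteq> U"
  proof
    fix C assume C: "C \<in> chains {G. norming_graph d G}"
    show "\<exists>U\<in>{G. norming_graph d G}. \<forall>X\<in>C. X \<subseteq> U"
      using norming_graph_line norming_graph_Union_chain[OF C] by (cases "C = {}") blast+
  qed
  from Zorn_Lemma2[OF this] obtain M where M: "norming_graph d M"
    and total: "\<And>w. \<exists>a. (w, a) \<in> M"
    using maximal_norming_graph_total by (metis mem_Collect_eq)
  have unique: "\<And>x a b. (x, a) \<in> M \<Longrightarrow> (x, b) \<in> M \<Longrightarrow> a = b"
    and add: "\<And>x a y b. (x, a) \<in> M \<Longrightarrow> (y, b) \<in> M \<Longrightarrow> (x + y, a + b) \<in> M"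
    and scale: "\<And>x a r. (x, a) \<in> M \<Longrightarrow> (r *\<^sub>R x, r * a) \<in> M"
    and bound: "\<And>x a. (x, a) \<in> M \<Longrightarrow> a \<le> norm x"
    and dM: "(d, norm d) \<in> M"
    using M unfolding norming_graph_def by blast+
  define \<phi> where "\<phi> x = (THE a. (x, a) \<in> M)" for x
  have graph: "(x, \<phi> x) \<in> M" for x
    unfolding \<phi>_def using total[of x] unique by (metis theI)
  have \<phi>_eq: "\<phi> x = a" if "(x, a) \<in> M" for x a
    using unique[OF graph that] .
  show thesis
  proof
    show "linear \<phi>"
      by (rule linearI) (simp_all add: \<phi>_eq[OF add[OF graph graph]] \<phi>_eq[OF scale[OF graph]])
    show "\<bar>\<phi> x\<bar> \<le> norm x" for x
      using bound[OF graph, of x] bound[OF graph, of "-x"] \<phi>_eq[OF scale[OF graph[of x], of "-1"]]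
      by simp
    show "\<phi> d = norm d" using \<phi>_eq[OF dM] .
  qed
qed

section \<open>Phragmen-Lindelof for functions of exponential type zero\<close>

lemma le_of_continuous_at_right_0:
  fixes f :: "real \<Rightarrow> real"
  assumes "continuous (at_right 0) f" and "\<And>e. 0 < e \<Longrightarrow> X \<le> f e"
  shows "X \<le> f 0"
proof (rule tendsto_lowerbound)
  show "(f \<longlongrightarrow> f 0) (at_right 0)" using assms(1) by (simp add: continuous_within)
  show "\<forall>\<^sub>F e in at_right 0. X \<le> f e"
    using eventually_at_right_less[of "0::real"] by eventually_elim (use assms(2) in auto)
qed simp

lemma maximum_modulus_closed_unbounded:
  fixes f :: "complex \<Rightarrow> complex"
  assumes "f holomorphic_on U" "open U" "S \<subseteq> U" "closed S"
    and frontier: "\<And>w. w \<in> frontier S \<Longrightarrow> norm (f w) \<le> B"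
    and far: "\<And>w. w \<in> S \<Longrightarrow> R \<le> norm w \<Longrightarrow> norm (f w) \<le> B"
    and "z \<in> S"
  shows "norm (f z) \<le> B"
proof -
  define R' where "R' = max R (norm z + 1)"
  define T where "T = S \<inter> cball 0 R'"
  have "closed T" using \<open>closed S\<close> by (simp add: T_def closed_Int)
  show ?thesis
  proof (rule maximum_modulus_frontier[where S=T and f=f])
    show "f holomorphic_on interior T"
      using assms(1,3) interior_subset unfolding T_def by (meson holomorphic_on_subset inf.coboundedI1 order.trans)
    show "continuous_on (closure T) f"
      using assms(1,3) \<open>closed T\<close> unfolding T_def
      by (metis closure_closed holomorphic_on_imp_continuous_on holomorphic_on_subset inf.coboundedI1)
    show "bounded T" unfolding T_def by (simp add: bounded_Int)
    show "norm (f w) \<le> B" if "w \<in> frontier T" for w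
    proof -
      have "w \<in> T" using that \<open>closed T\<close> by (simp add: frontier_def)
      from that have "w \<in> frontier S \<or> w \<in> frontier (cball 0 R')"
        unfolding T_def frontier_Int by auto
      then show ?thesis
      proof
        assume "w \<in> frontier (cball 0 R')"
        moreover have "R' > 0" unfolding R'_def by (smt (verit) norm_ge_zero)
        ultimately have "norm w = R'" by auto
        then show ?thesis using far \<open>w \<in> T\<close> by (simp add: T_def R'_def)
      qed (rule frontier)
    qed
    show "z \<in> T" using \<open>z \<in> S\<close> by (simp add: T_def R'_def)
  qed
qed

lemma frontier_upper_half_plane: "frontier {z::complex. 0 \<le> Im z} = {z. Im z = 0}"
  using frontier_halfspace_ge[of \<i> 0] by simp

lemma frontier_first_quadrant:
  "frontier {z::complex. 0 \<le> Re z \<and> 0 \<le> Im z} \<subseteq> {z. 0 \<le> Re z \<and> 0 \<le> Im z \<and> (Re z = 0 \<or> Im z = 0)}"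
proof -
  have "frontier {z::complex. 0 \<le> Re z} = {z. Re z = 0}"
    using frontier_halfspace_ge[of "1::complex" 0] by simp
  moreover have "{z::complex. 0 \<le> Re z \<and> 0 \<le> Im z} = {z. 0 \<le> Re z} \<inter> {z. 0 \<le> Im z}" by auto
  moreover have "closed {z::complex. 0 \<le> Re z \<and> 0 \<le> Im z}"
    by (simp add: closed_Collect_conj closed_halfspace_Re_ge closed_halfspace_Im_ge)
  ultimately show ?thesis
    by (simp add: frontier_Int frontier_upper_half_plane) blast
qed

lemma norm_le_on_frontier_first_quadrant:
  fixes F :: "complex \<Rightarrow> 'a::real_normed_vector"
  assumes real_axis: "\<And>x::real. 0 \<le> x \<Longrightarrow> norm (F (of_real x)) \<le> B"
    and imag_axis: "\<And>y::real. 0 \<le> y \<Longrightarrow> norm (F (\<i> * of_real y)) \<le> B"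
    and "w \<in> frontier {z. 0 \<le> Re z \<and> 0 \<le> Im z}"
  shows "norm (F w) \<le> B"
proof -
  have w: "0 \<le> Re w" "0 \<le> Im w" "Re w = 0 \<or> Im w = 0"
    using frontier_first_quadrant assms(3) by blast+
  show ?thesis
  proof (cases "Re w = 0")
    case True
    then have "w = \<i> * of_real (Im w)" by (simp add: complex_eq_iff)
    then show ?thesis using imag_axis w by metis
  next
    case False
    then have "w = of_real (Re w)" using w by (simp add: complex_eq_iff)
    then show ?thesis using real_axis w by metis
  qed
qed

lemma exp_linear_minus_three_halves_power_eventually_le:
  fixes A C :: real
  assumes "0 < c" "0 < B"
  obtains R where "\<And>r. R \<le> r \<Longrightarrow> \<bar>C\<bar> * exp (A * r - c * r powr (3/2)) \<le> B"
proof -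
  have "((\<lambda>r::real. \<bar>C\<bar> * exp (A * r - c * r powr (3/2))) \<longlongrightarrow> 0) at_top"
    using \<open>0 < c\<close> by real_asymp
  then have "\<forall>\<^sub>F r in at_top. \<bar>C\<bar> * exp (A * r - c * r powr (3/2)) < B"
    using \<open>0 < B\<close> by (intro order_tendstoD) auto
  then show thesis using that unfolding eventually_at_top_linorder by (meson less_imp_le)
qed

text \<open>A damping factor for the first quadrant: \<open>(1 - \<i>)(z + 1)\<close> maps the quadrant into the sector
  \<open>\<bar>arg\<bar> \<le> \<pi>/4\<close>, so its \<open>3/2\<close>-power has argument at most \<open>3\<pi>/8\<close> and its real part grows like
  \<open>\<bar>z\<bar>\<^sup>3\<^sup>/\<^sup>2\<close>, faster than any exponential of linear growth can compensate.\<close>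

definition quadrant_weight :: "complex \<Rightarrow> complex" where
  "quadrant_weight z = exp ((3/2) * Ln ((1 - \<i>) * (z + 1)))"

lemma quadrant_weight_holomorphic:
  "quadrant_weight holomorphic_on {z. 0 < Re ((1 - \<i>) * (z + 1))}"
  unfolding quadrant_weight_def by (intro holomorphic_intros) (auto simp: complex_nonpos_Reals_iff)

lemma abs_Im_Ln_le_quarter_pi:
  assumes "0 < Re w" "\<bar>Im w\<bar> \<le> Re w"
  shows "\<bar>Im (Ln w)\<bar> \<le> pi / 4"
proof -
  have "w \<noteq> 0" using assms(1) by auto
  then have "Im (Ln w) = Arg w" by (simp add: Arg_eq_Im_Ln)
  also have "\<dots> = arctan (Im w / Re w)" using assms(1) by (rule arg_conv_arctan)
  finally have "Im (Ln w) = arctan (Im w / Re w)" .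
  moreover have "\<bar>Im w / Re w\<bar> \<le> 1" using assms by (simp add: abs_divide divide_le_eq_1)
  ultimately show ?thesis using arctan_le_pi4 by simp
qed

lemma Re_quadrant_weight_ge:
  assumes "0 \<le> Re z" "0 \<le> Im z"
  shows "cos (3 * pi / 8) * norm z powr (3/2) \<le> Re (quadrant_weight z)"
proof -
  define w where "w = (1 - \<i>) * (z + 1)"
  have Re_w: "Re w = Re z + Im z + 1" and Im_w: "Im w = Im z - Re z - 1"
    by (simp_all add: w_def algebra_simps)
  have "w \<noteq> 0" using assms Re_w by auto
  have "\<bar>Im (Ln w)\<bar> \<le> pi / 4" using assms Re_w Im_w by (intro abs_Im_Ln_le_quarter_pi) auto
  have "Re (exp ((3/2) * Ln w)) = exp (Re ((3/2) * Ln w)) * cos (Im ((3/2) * Ln w))"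
    by (rule Re_exp)
  also have "exp (Re ((3/2) * Ln w)) = norm w powr (3/2)"
    using \<open>w \<noteq> 0\<close> by (simp add: Re_Ln powr_def)
  finally have Re_eq: "Re (exp ((3/2) * Ln w)) = norm w powr (3/2) * cos ((3/2) * Im (Ln w))"
    by simp
  have "cos (3 * pi / 8) \<le> cos \<bar>(3/2) * Im (Ln w)\<bar>"
    using \<open>\<bar>Im (Ln w)\<bar> \<le> pi / 4\<close> by (intro cos_monotone_0_pi_le) auto
  also have "\<dots> = cos ((3/2) * Im (Ln w))"
    by (cases "0 \<le> Im (Ln w)") auto
  finally have cos_ge: "cos (3 * pi / 8) \<le> cos ((3/2) * Im (Ln w))" .
  have "norm z \<le> norm w"
  proof -
    have "norm z ^ 2 \<le> norm (z + 1) ^ 2"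
      unfolding cmod_power2 using assms by (simp add: power2_eq_square algebra_simps)
    then have "norm z \<le> norm (z + 1)" by (rule power2_le_imp_le) simp
    also have "\<dots> \<le> norm (1 - \<i>) * norm (z + 1)"
    proof -
      have "norm (1 - \<i>) = sqrt 2" by (simp add: cmod_def)
      then show ?thesis by (simp add: mult_le_cancel_right1)
    qed
    finally show ?thesis by (simp add: w_def norm_mult)
  qed
  then have "norm z powr (3/2) \<le> norm w powr (3/2)" by (intro powr_mono2) auto
  moreover have "0 \<le> cos (3 * pi / 8)" by (intro cos_ge_zero) auto
  ultimately have "cos (3 * pi / 8) * norm z powr (3/2) \<le> cos ((3/2) * Im (Ln w)) * norm w powr (3/2)"
    using cos_ge by (intro mult_mono) auto
  then show ?thesis unfolding quadrant_weight_def w_def[symmetric] Re_eq by (simp add: mult.commute)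
qed

lemma phragmen_lindelof_quadrant_damped:
  fixes F :: "complex \<Rightarrow> complex"
  assumes F: "F holomorphic_on UNIV" and "0 < B" "0 < e"
    and real_axis: "\<And>x::real. 0 \<le> x \<Longrightarrow> norm (F (of_real x)) \<le> B"
    and imag_axis: "\<And>y::real. 0 \<le> y \<Longrightarrow> norm (F (\<i> * of_real y)) \<le> B"
    and growth: "\<And>z. 0 \<le> Re z \<Longrightarrow> 0 \<le> Im z \<Longrightarrow> norm (F z) \<le> C * exp (A * norm z)"
    and z: "0 \<le> Re z" "0 \<le> Im z"
  shows "norm (F z) \<le> B * exp (e * Re (quadrant_weight z))"
proof -
  define c where "c = cos (3 * pi / 8)"
  have "0 < c" unfolding c_def by (intro cos_gt_zero) auto
  define Q where "Q = {z::complex. 0 \<le> Re z \<and> 0 \<le> Im z}"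
  define U where "U = {z. 0 < Re ((1 - \<i>) * (z + 1))}"
  define W where "W w = F w * exp (- of_real e * quadrant_weight w)" for w
  have norm_W: "norm (W w) = norm (F w) * exp (- e * Re (quadrant_weight w))" for w
    by (simp add: W_def norm_mult)
  have weight: "c * norm w powr (3/2) \<le> Re (quadrant_weight w)" if "w \<in> Q" for w
    using Re_quadrant_weight_ge that by (simp add: c_def Q_def)
  obtain R where R: "\<And>r. R \<le> r \<Longrightarrow> \<bar>C\<bar> * exp (A * r - (e * c) * r powr (3/2)) \<le> B"
    using exp_linear_minus_three_halves_power_eventually_le[of "e * c" B] \<open>0 < e\<close> \<open>0 < c\<close> \<open>0 < B\<close>
    by auto
  have "norm (W z) \<le> B"
  proof (rule maximum_modulus_closed_unbounded[where f=W and U=U and S=Q and R=R])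
    show "W holomorphic_on U" unfolding W_def U_def
      using quadrant_weight_holomorphic holomorphic_on_subset[OF F] by (intro holomorphic_intros) auto
    show "open U" unfolding U_def by (intro open_Collect_less continuous_intros)
    show "Q \<subseteq> U" by (auto simp: Q_def U_def)
    show "closed Q"
      by (simp add: Q_def closed_Collect_conj closed_halfspace_Re_ge closed_halfspace_Im_ge)
    show "norm (W w) \<le> B" if "w \<in> frontier Q" for w
    proof -
      have "w \<in> Q" using frontier_first_quadrant that unfolding Q_def by blast
      then have "0 \<le> Re (quadrant_weight w)"
        using order_trans[OF _ weight] \<open>0 < c\<close> by simp
      then have "exp (- e * Re (quadrant_weight w)) \<le> 1" using \<open>0 < e\<close> by simp
      moreover have "norm (F w) \<le> B"
        using real_axis imag_axis that unfolding Q_def by (rule norm_le_on_frontier_first_quadrant)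
      ultimately have "norm (F w) * exp (- e * Re (quadrant_weight w)) \<le> B * 1"
        using \<open>0 < B\<close> by (intro mult_mono) auto
      then show ?thesis by (simp add: norm_W)
    qed
    show "norm (W w) \<le> B" if "w \<in> Q" "R \<le> norm w" for w
    proof -
      have "norm (W w) \<le> (\<bar>C\<bar> * exp (A * norm w)) * exp (- e * (c * norm w powr (3/2)))"
        unfolding norm_W
      proof (intro mult_mono)
        show "norm (F w) \<le> \<bar>C\<bar> * exp (A * norm w)"
          using growth[of w] that(1) unfolding Q_def by (smt (verit) exp_ge_zero mem_Collect_eq mult_right_mono)
        show "exp (- e * Re (quadrant_weight w)) \<le> exp (- e * (c * norm w powr (3/2)))"
          using weight[OF that(1)] \<open>0 < e\<close> by simp
      qed auto
      also have "\<dots> = \<bar>C\<bar> * exp (A * norm w - e * c * norm w powr (3/2))"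
        by (simp add: exp_diff exp_minus field_simps)
      also have "\<dots> \<le> B" using R that(2) by simp
      finally show ?thesis .
    qed
    show "z \<in> Q" using z by (simp add: Q_def)
  qed
  moreover have "norm (F z) = norm (W z) * exp (e * Re (quadrant_weight z))"
    unfolding norm_W by (simp add: mult_exp_exp)
  ultimately show ?thesis by (simp add: mult_right_mono)
qed

lemma phragmen_lindelof_quadrant:
  fixes F :: "complex \<Rightarrow> complex"
  assumes "F holomorphic_on UNIV" "0 < B"
    and "\<And>x::real. 0 \<le> x \<Longrightarrow> norm (F (of_real x)) \<le> B"
    and "\<And>y::real. 0 \<le> y \<Longrightarrow> norm (F (\<i> * of_real y)) \<le> B"
    and "\<And>z. 0 \<le> Re z \<Longrightarrow> 0 \<le> Im z \<Longrightarrow> norm (F z) \<le> C * exp (A * norm z)"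
    and "0 \<le> Re z" "0 \<le> Im z"
  shows "norm (F z) \<le> B"
proof -
  have "continuous (at_right 0) (\<lambda>e. B * exp (e * Re (quadrant_weight z)))"
    by (intro continuous_intros)
  moreover have "norm (F z) \<le> B * exp (e * Re (quadrant_weight z))" if "0 < e" for e
    using phragmen_lindelof_quadrant_damped[OF assms(1,2) that assms(3-)] .
  ultimately have "norm (F z) \<le> B * exp (0 * Re (quadrant_weight z))"
    by (rule le_of_continuous_at_right_0)
  then show ?thesis by simp
qed

text \<open>The quadrant case applied to the first quadrant and, rotated by \<open>\<i>\<close>, to the second.\<close>

lemma phragmen_lindelof_upper_half_plane_axes:
  fixes H :: "complex \<Rightarrow> complex"
  assumes H: "H holomorphic_on UNIV" and "0 < B"
    and real_axis: "\<And>x::real. norm (H (of_real x)) \<le> B"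
    and imag_axis: "\<And>y::real. 0 \<le> y \<Longrightarrow> norm (H (\<i> * of_real y)) \<le> B"
    and growth: "\<And>z. 0 \<le> Im z \<Longrightarrow> norm (H z) \<le> C * exp (norm z)"
    and z: "0 \<le> Im z"
  shows "norm (H z) \<le> B"
proof (cases "0 \<le> Re z")
  case True
  show ?thesis
    by (rule phragmen_lindelof_quadrant[where F=H and A=1 and C=C])
       (use assms True in auto)
next
  case False
  have "(\<lambda>v. H (\<i> * v)) holomorphic_on UNIV"
    by (rule holomorphic_on_compose_gen[unfolded o_def, OF _ H]) (auto intro!: holomorphic_intros)
  moreover have "norm (H (\<i> * (\<i> * of_real y))) \<le> B" for y :: real
    using real_axis[of "-y"] by simp
  moreover have "norm (H (\<i> * u)) \<le> C * exp (1 * norm u)" if "0 \<le> Re u" for u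
    using growth[of "\<i> * u"] that by (simp add: norm_mult)
  ultimately have "norm (H (\<i> * (- \<i> * z))) \<le> B"
    using phragmen_lindelof_quadrant[where F="\<lambda>v. H (\<i> * v)" and A=1 and C=C and z="- \<i> * z"]
      imag_axis \<open>0 < B\<close> False z by auto
  then show ?thesis by simp
qed

text \<open>Dividing by \<open>1 - \<i> e z\<close>, which has modulus at least 1 on the half plane and grows
  linearly, turns the global bound into decay at infinity.\<close>

lemma phragmen_lindelof_half_plane_damped:
  fixes H :: "complex \<Rightarrow> complex"
  assumes H: "H holomorphic_on UNIV" and "0 < K" "0 < e"
    and real_axis: "\<And>x::real. norm (H (of_real x)) \<le> K"
    and bounded: "\<And>z. 0 \<le> Im z \<Longrightarrow> norm (H z) \<le> B"
    and z: "0 \<le> Im z"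
  shows "norm (H z) \<le> K * (1 + e * norm z)"
proof -
  define D where "D w = 1 - \<i> * of_real e * w" for w
  have Re_D: "Re (D w) = 1 + e * Im w" for w by (simp add: D_def)
  have D_ge_1: "1 \<le> norm (D w)" if "0 \<le> Im w" for w
    using complex_Re_le_cmod[of "D w"] Re_D[of w] that \<open>0 < e\<close> by (smt (verit) mult_nonneg_nonneg)
  have D_ge_linear: "e * norm w - 1 \<le> norm (D w)" for w
    using norm_triangle_ineq4[of 1 "D w"] \<open>0 < e\<close> by (simp add: D_def norm_minus_commute norm_mult)
  define U where "U = {w. - 1 / e < Im w}"
  have D_nonzero: "D w \<noteq> 0" if "w \<in> U" for w
  proof -
    have "- 1 < e * Im w" using that \<open>0 < e\<close> by (simp add: U_def field_simps)
    then show ?thesis using Re_D[of w] by auto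
  qed
  have "0 \<le> B" using bounded[of 0] by (smt (verit) norm_ge_zero zero_complex.sel(2))
  have "norm (H z / D z) \<le> K"
  proof (rule maximum_modulus_closed_unbounded[where f="\<lambda>w. H w / D w" and U=U and S="{w. 0 \<le> Im w}" and R="(B / K + 1) / e"])
    show "(\<lambda>w. H w / D w) holomorphic_on U"
      using D_nonzero holomorphic_on_subset[OF H] unfolding D_def by (intro holomorphic_intros) auto
    show "open U" unfolding U_def by (rule open_halfspace_Im_gt)
    show "{w. 0 \<le> Im w} \<subseteq> U" using \<open>0 < e\<close> by (auto simp: U_def) (smt (verit) divide_pos_pos)
    show "closed {w. 0 \<le> Im w}" by (rule closed_halfspace_Im_ge)
    show "norm (H w / D w) \<le> K" if "w \<in> frontier {w. 0 \<le> Im w}" for w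
    proof -
      have "Im w = 0" using that by (simp add: frontier_upper_half_plane)
      then have "w = of_real (Re w)" by (simp add: complex_eq_iff)
      then have "norm (H w) \<le> K" using real_axis by metis
      have "1 \<le> norm (D w)" using D_ge_1[of w] \<open>Im w = 0\<close> by simp
      then have "norm (H w) / norm (D w) \<le> norm (H w) / 1"
        by (intro divide_left_mono) auto
      with \<open>norm (H w) \<le> K\<close> show ?thesis by (simp add: norm_divide)
    qed
    show "norm (H w / D w) \<le> K" if "w \<in> {w. 0 \<le> Im w}" "(B / K + 1) / e \<le> norm w" for w
    proof (cases "B = 0")
      case True
      then show ?thesis using bounded[of w] that \<open>0 < K\<close> by (simp add: norm_divide)
    next
      case False
      have "B / K + 1 \<le> e * norm w" using that \<open>0 < e\<close> by (simp add: field_simps)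
      then have "B / K \<le> norm (D w)" using D_ge_linear[of w] by linarith
      moreover have "0 < B / K" using False \<open>0 \<le> B\<close> \<open>0 < K\<close> by simp
      ultimately have "norm (H w / D w) \<le> B / (B / K)"
        unfolding norm_divide using bounded that \<open>0 \<le> B\<close> by (intro frac_le) auto
      then show ?thesis using False \<open>0 < K\<close> by simp
    qed
  qed (use z in simp)
  moreover have "0 < norm (D z)" using D_ge_1[OF z] by linarith
  ultimately have "norm (H z) \<le> K * norm (D z)"
    by (simp add: norm_divide pos_divide_le_eq mult.commute)
  also have "\<dots> \<le> K * (1 + e * norm z)"
    using norm_triangle_ineq4[of 1 "\<i> * of_real e * z"] \<open>0 < K\<close> \<open>0 < e\<close>
    by (intro mult_left_mono) (auto simp: D_def norm_mult)
  finally show ?thesis .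
qed

lemma phragmen_lindelof_half_plane:
  fixes H :: "complex \<Rightarrow> complex"
  assumes "H holomorphic_on UNIV" "0 < K"
    and "\<And>x::real. norm (H (of_real x)) \<le> K"
    and "\<And>z. 0 \<le> Im z \<Longrightarrow> norm (H z) \<le> B"
    and "0 \<le> Im z"
  shows "norm (H z) \<le> K"
proof -
  have "continuous (at_right 0) (\<lambda>e. K * (1 + e * norm z))"
    by (intro continuous_intros)
  moreover have "norm (H z) \<le> K * (1 + e * norm z)" if "0 < e" for e
    using phragmen_lindelof_half_plane_damped[OF assms(1,2) that assms(3-)] .
  ultimately have "norm (H z) \<le> K * (1 + 0 * norm z)"
    by (rule le_of_continuous_at_right_0)
  then show ?thesis by simp
qed

definition exponential_type_zero :: "(complex \<Rightarrow> complex) \<Rightarrow> bool" where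
  "exponential_type_zero g \<longleftrightarrow> (\<forall>e>0. \<exists>C. \<forall>z. norm (g z) \<le> C * exp (e * norm z))"

lemma exponential_type_zero_rotate:
  assumes "exponential_type_zero g" "norm u = 1"
  shows "exponential_type_zero (\<lambda>z. g (u * z))"
  using assms unfolding exponential_type_zero_def by (metis mult_1 norm_mult)

text \<open>For \<open>e > 0\<close> the function \<open>g(z) e\<^sup>\<i>\<^sup>e\<^sup>z\<close> is bounded on both boundary axes of the upper
  half plane, by \<open>K\<close> on the real axis and by the growth bound of \<open>g\<close> on the imaginary axis.\<close>

lemma exponential_type_zero_upper_half_plane_damped:
  fixes g :: "complex \<Rightarrow> complex"
  assumes g: "g holomorphic_on UNIV" "exponential_type_zero g" and "0 < K" "0 < e"
    and real_axis: "\<And>x::real. norm (g (of_real x)) \<le> K"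
    and z: "0 \<le> Im z"
  shows "norm (g z) \<le> K * exp (e * Im z)"
proof -
  obtain C1 where C1: "\<And>w. norm (g w) \<le> C1 * exp (1 * norm w)"
    using g(2) unfolding exponential_type_zero_def by (meson zero_less_one)
  obtain Ce where Ce: "\<And>w. norm (g w) \<le> Ce * exp (e * norm w)"
    using g(2) \<open>0 < e\<close> unfolding exponential_type_zero_def by blast
  define H where "H w = g w * exp (\<i> * of_real e * w)" for w
  have norm_H: "norm (H w) = norm (g w) * exp (- e * Im w)" for w
    by (simp add: H_def norm_mult)
  have "H holomorphic_on UNIV" unfolding H_def using g(1) by (intro holomorphic_intros) auto
  moreover have "0 < max K Ce" using \<open>0 < K\<close> by simp
  moreover have "norm (H (of_real x)) \<le> max K Ce" for x :: real
    using real_axis[of x] by (simp add: norm_H)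
  moreover have "norm (H (\<i> * of_real y)) \<le> max K Ce" if "0 \<le> y" for y :: real
  proof -
    have "norm (H (\<i> * of_real y)) = norm (g (\<i> * of_real y)) * exp (- e * y)" by (simp add: norm_H)
    also have "\<dots> \<le> (Ce * exp (e * y)) * exp (- e * y)"
      using Ce[of "\<i> * of_real y"] that by (intro mult_right_mono) (auto simp: norm_mult)
    also have "\<dots> = Ce" by (simp add: mult.assoc flip: exp_add)
    finally show ?thesis by simp
  qed
  moreover have "norm (H w) \<le> C1 * exp (norm w)" if "0 \<le> Im w" for w
  proof -
    have "norm (H w) \<le> norm (g w) * 1" unfolding norm_H using that \<open>0 < e\<close> by (intro mult_left_mono) auto
    then show ?thesis using C1[of w] by simp
  qed
  ultimately have bounded: "norm (H w) \<le> max K Ce" if "0 \<le> Im w" for w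
    by (rule phragmen_lindelof_upper_half_plane_axes) (use that in auto)
  have "norm (H z) \<le> K"
    by (rule phragmen_lindelof_half_plane[of H K "max K Ce"])
       (use \<open>H holomorphic_on UNIV\<close> \<open>0 < K\<close> z bounded in \<open>auto simp: norm_H real_axis\<close>)
  moreover have "norm (g z) = norm (H z) * exp (e * Im z)"
    by (simp add: norm_H mult.assoc flip: exp_add)
  ultimately show ?thesis by (simp add: mult_right_mono)
qed

lemma exponential_type_zero_upper_half_plane_bound:
  fixes g :: "complex \<Rightarrow> complex"
  assumes "g holomorphic_on UNIV" "exponential_type_zero g" "0 < K"
    and "\<And>x::real. norm (g (of_real x)) \<le> K"
    and "0 \<le> Im z"
  shows "norm (g z) \<le> K"
proof -
  have "continuous (at_right 0) (\<lambda>e. K * exp (e * Im z))"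
    by (intro continuous_intros)
  moreover have "norm (g z) \<le> K * exp (e * Im z)" if "0 < e" for e
    using exponential_type_zero_upper_half_plane_damped[OF assms(1-3) that assms(4-)] .
  ultimately have "norm (g z) \<le> K * exp (0 * Im z)"
    by (rule le_of_continuous_at_right_0)
  then show ?thesis by simp
qed

lemma exponential_type_zero_bounded_on_real_line_constant:
  fixes g :: "complex \<Rightarrow> complex"
  assumes g: "g holomorphic_on UNIV" "exponential_type_zero g"
    and real_axis: "\<And>x::real. norm (g (of_real x)) \<le> K"
  shows "g constant_on UNIV"
proof (rule Liouville_theorem[OF g(1)])
  define K' where "K' = max K 1"
  have real_axis': "norm (g (of_real x)) \<le> K'" for x :: real
    using real_axis[of x] by (simp add: K'_def)
  have "norm (g z) \<le> K'" for z
  proof (cases "0 \<le> Im z")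
    case True
    then show ?thesis
      using exponential_type_zero_upper_half_plane_bound[OF g _ real_axis'] by (simp add: K'_def)
  next
    case False
    have "norm (g (- 1 * (- z))) \<le> K'"
    proof (rule exponential_type_zero_upper_half_plane_bound[where g="\<lambda>z. g (- 1 * z)"])
      show "(\<lambda>z. g (- 1 * z)) holomorphic_on UNIV"
        by (rule holomorphic_on_compose_gen[unfolded o_def, OF _ g(1)]) (auto intro!: holomorphic_intros)
      show "exponential_type_zero (\<lambda>z. g (- 1 * z))"
        using exponential_type_zero_rotate[OF g(2), of "- 1"] by simp
      show "norm (g (- 1 * complex_of_real x)) \<le> K'" for x
        using real_axis'[of "- x"] by simp
    qed (use False in \<open>auto simp: K'_def\<close>)
    then show ?thesis by simp
  qed
  then show "bounded (range g)" by (auto simp: bounded_iff)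
qed

lemma cscale_zero_left [simp]: "cscale 0 (x::'a::cstar_algebra_1) = 0"
  using cscale_add_left[of 0 0 x] by simp

lemma cscale_zero_right [simp]: "cscale c (0::'a::cstar_algebra_1) = 0"
  using cscale_add_right[of c 0 0] by simp

lemma cscale_scaleR: "cscale c (r *\<^sub>R x) = r *\<^sub>R cscale c (x::'a::cstar_algebra_1)"
  by (metis cscale_cscale cscale_of_real mult.commute)

lemma cscale_mult_cscale: "cscale c x * cscale d y = cscale (c * d) (x * y::'a::cstar_algebra_1)"
  by (simp add: cscale_mult_left cscale_mult_right cscale_cscale mult.commute)

lemma cscale_power: "cscale c x ^ n = cscale (c ^ n) (x ^ n::'a::cstar_algebra_1)"
  by (induction n) (simp_all add: cscale_one cscale_mult_cscale)

lemma adj_scaleR: "adj (r *\<^sub>R x) = r *\<^sub>R adj (x::'a::cstar_algebra_1)"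
  using adj_cscale[of "of_real r" x] by (simp add: cscale_of_real)

lemma adj_one [simp]: "adj (1::'a::cstar_algebra_1) = 1"
  using adj_mult[of "adj 1" "1::'a"] by (simp add: adj_adj)

lemma adj_power: "adj (x ^ n) = adj (x::'a::cstar_algebra_1) ^ n"
proof (induction n)
  case (Suc n)
  have "adj (x ^ Suc n) = adj (x ^ n * x)" by (simp add: power_commutes)
  also have "\<dots> = adj x ^ Suc n" by (simp add: adj_mult Suc)
  finally show ?case .
qed simp

lemma norm_adj [simp]: "norm (adj x) = norm (x::'a::cstar_algebra_1)"
proof -
  have le: "norm z \<le> norm (adj z)" for z :: 'a
  proof (cases "z = 0")
    case False
    have "norm z * norm z = norm (adj z * z)" by (simp add: cstar_identity power2_eq_square)
    also have "\<dots> \<le> norm (adj z) * norm z" by (rule norm_mult_ineq)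
    finally show ?thesis using False by simp
  qed simp
  show ?thesis using le[of x] le[of "adj x"] by (simp add: adj_adj)
qed

lemma cscale_sum: "cscale c (sum f A :: 'a::cstar_algebra_1) = (\<Sum>i\<in>A. cscale c (f i))"
  by (induction A rule: infinite_finite_induct) (simp_all add: cscale_add_right)

lemma bounded_linear_adj: "bounded_linear (adj :: 'a::cstar_algebra_1 \<Rightarrow> 'a)"
  by (rule bounded_linear_intro[where K=1]) (simp_all add: adj_add adj_scaleR)

lemma adj_exp: "adj (exp x) = exp (adj x :: 'a::cstar_algebra_1)"
proof -
  have "(\<lambda>n. adj (x ^ n /\<^sub>R fact n)) sums adj (exp x)"
    by (rule bounded_linear.sums[OF bounded_linear_adj exp_converges])
  then have "(\<lambda>n. adj x ^ n /\<^sub>R fact n) sums adj (exp x)"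
    by (simp add: adj_scaleR adj_power)
  then show ?thesis using exp_converges sums_unique2 by blast
qed

lemma exp_cscale_add:
  "exp (cscale c x) * exp (cscale d x) = exp (cscale (c + d) (x::'a::cstar_algebra_1))"
proof -
  have "cscale c x * cscale d x = cscale d x * cscale c x"
    by (simp add: cscale_mult_cscale mult.commute)
  then show ?thesis by (simp add: exp_add_commuting[of "cscale c x", symmetric] cscale_add_left)
qed

lemma norm_exp_imag_cscale_self_adjoint:
  fixes a :: "'a::cstar_algebra_1"
  assumes "adj a = a"
  shows "norm (exp (cscale (\<i> * of_real t) a)) = 1"
proof -
  define u where "u = exp (cscale (\<i> * of_real t) a)"
  have "adj u = exp (cscale (- (\<i> * of_real t)) a)"
    unfolding u_def by (simp add: adj_exp adj_cscale assms)
  then have "adj u * u = 1" unfolding u_def by (simp add: exp_cscale_add)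
  then have "(norm u)\<^sup>2 = 1" by (metis cstar_identity norm_one)
  then have "norm u = 1 \<or> norm u = - 1" by (simp add: power2_eq_1_iff)
  with norm_ge_zero[of u] have "norm u = 1" by linarith
  then show ?thesis by (simp add: u_def)
qed

lemma norm_exp_imag_cscale_le:
  fixes a :: "'a::cstar_algebra_1"
  assumes M: "\<And>n::int. norm (exp (cscale (\<i> * of_int n) a)) \<le> M"
  shows "norm (exp (cscale (\<i> * of_real s) a)) \<le> M * exp (norm a)"
proof -
  define n where "n = \<lfloor>s\<rfloor>"
  define f where "f = s - of_int n"
  have f: "0 \<le> f" "f \<le> 1" unfolding f_def n_def by linarith+
  have "\<i> * of_real s = \<i> * of_int n + \<i> * of_real f" by (simp add: f_def algebra_simps)
  then have "exp (cscale (\<i> * of_real s) a) = exp (cscale (\<i> * of_int n) a) * exp (cscale (\<i> * of_real f) a)"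
    by (simp add: exp_cscale_add)
  then have "norm (exp (cscale (\<i> * of_real s) a))
      \<le> norm (exp (cscale (\<i> * of_int n) a)) * norm (exp (cscale (\<i> * of_real f) a))"
    by (simp add: norm_mult_ineq)
  also have "\<dots> \<le> M * exp (norm a)"
  proof (rule mult_mono)
    have "norm (exp (cscale (\<i> * of_real f) a)) \<le> exp (f * norm a)"
      using norm_exp[of "cscale (\<i> * of_real f) a"] f by (simp add: norm_cscale norm_mult)
    also have "\<dots> \<le> exp (norm a)" using f by (simp add: mult_left_le_one_le)
    finally show "norm (exp (cscale (\<i> * of_real f) a)) \<le> exp (norm a)" .
    show "0 \<le> M" using M[of 0] norm_ge_zero order_trans by blast
  qed (use M in auto)
  finally show ?thesis .
qed

section \<open>The binomial sums \<open>C\<^sup>n\<^sub>a\<^sub>,\<^sub>b\<close>\<close>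

lemma Cpow_one_1: "Cpow_one b (a::'a::cstar_algebra_1) 1 = b - a"
  by (simp add: Cpow_one_def atMost_Suc)

lemma Cpow_one_same: "0 < n \<Longrightarrow> Cpow_one a (a::'a::cstar_algebra_1) n = 0"
proof -
  assume "0 < n"
  have "Cpow_one a a n = (\<Sum>k\<le>n. (-1) ^ k * of_nat (n choose k)) *\<^sub>R a ^ n"
    unfolding Cpow_one_def scaleR_sum_left by (intro sum.cong refl) (simp add: power_add[symmetric])
  also have "(\<Sum>k\<le>n. (-1) ^ k * of_nat (n choose k)) = (0::real)"
    using choose_alternating_sum[OF \<open>0 < n\<close>] .
  finally show ?thesis by simp
qed

lemma rho_same: "rho a (a::'a::cstar_algebra_1) = 0"
proof -
  have "(\<lambda>n. ereal (root n (norm (Cpow_one a a n)))) = (\<lambda>n. 0)"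
  proof
    fix n
    show "ereal (root n (norm (Cpow_one a a n))) = 0"
      by (cases "n = 0") (simp_all add: Cpow_one_same)
  qed
  then show ?thesis unfolding rho_def by (simp add: Limsup_const)
qed

lemma geometric_bound_of_limsup_root_less:
  fixes x :: "nat \<Rightarrow> 'a::real_normed_vector"
  assumes "limsup (\<lambda>n. ereal (root n (norm (x n)))) < ereal e" "0 < e"
  obtains D where "\<And>n. norm (x n) \<le> D * e ^ n"
proof -
  obtain N where N: "\<And>n. N \<le> n \<Longrightarrow> root n (norm (x n)) < e"
    using Limsup_lessD[OF assms(1)] unfolding eventually_sequentially by auto
  define D where "D = 1 + (\<Sum>n\<le>N. norm (x n) / e ^ n)"
  have "norm (x n) \<le> D * e ^ n" for n
  proof (cases "n \<le> N")
    case True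
    have "norm (x n) / e ^ n \<le> (\<Sum>n\<le>N. norm (x n) / e ^ n)"
      using True \<open>0 < e\<close> by (intro member_le_sum) auto
    then have "norm (x n) / e ^ n \<le> D" unfolding D_def by simp
    then show ?thesis using \<open>0 < e\<close> by (simp add: divide_le_eq)
  next
    case False
    then have "norm (x n) = root n (norm (x n)) ^ n" by (simp add: real_root_pow_pos2)
    also have "\<dots> \<le> e ^ n" using N[of n] False by (intro power_mono) (auto simp: real_root_ge_zero)
    also have "\<dots> \<le> D * e ^ n"
      using \<open>0 < e\<close> by (simp add: D_def sum_nonneg)
    finally show ?thesis .
  qed
  then show thesis using that by blast
qed

lemma binomial_term_eq:
  fixes z :: complex
  assumes "i \<le> k"
  shows "z ^ i * (- z) ^ (k - i) / (fact i * fact (k - i))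
       = z ^ k / fact k * ((-1) ^ (k - i) * of_nat (k choose (k - i)))"
proof -
  have "(of_nat (k choose (k - i)) :: complex) = fact k / (fact i * fact (k - i))"
    using binomial_fact[of "k - i" k] assms by (simp add: mult.commute)
  moreover have "z ^ k = z ^ i * z ^ (k - i)" using assms by (simp flip: power_add)
  ultimately show ?thesis by (simp add: power_minus[of z] field_simps)
qed

lemma exp_mult_exp_sums_Cpow_one:
  fixes a b :: "'a::cstar_algebra_1"
  shows "(\<lambda>k. cscale (z ^ k / fact k) (Cpow_one b a k)) sums (exp (cscale z b) * exp (cscale (- z) a))"
proof -
  define p where "p i = cscale z b ^ i /\<^sub>R fact i" for i
  define q where "q i = cscale (- z) a ^ i /\<^sub>R fact i" for i
  have "(\<lambda>k. \<Sum>i\<le>k. p i * q (k - i)) sums ((\<Sum>k. p k) * (\<Sum>k. q k))"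
    unfolding p_def q_def by (intro Cauchy_product_sums summable_norm_exp)
  moreover have "(\<Sum>k. p k) = exp (cscale z b)" "(\<Sum>k. q k) = exp (cscale (- z) a)"
    unfolding p_def q_def by (simp_all add: exp_def)
  moreover have "(\<Sum>i\<le>k. p i * q (k - i)) = cscale (z ^ k / fact k) (Cpow_one b a k)" for k
  proof -
    have "(\<Sum>i\<le>k. p i * q (k - i))
        = (\<Sum>i\<le>k. cscale (z ^ k / fact k * ((-1) ^ (k - i) * of_nat (k choose (k - i)))) (b ^ i * a ^ (k - i)))"
    proof (intro sum.cong refl)
      fix i assume "i \<in> {..k}"
      have "p i * q (k - i) = cscale (z ^ i * (- z) ^ (k - i) / (fact i * fact (k - i))) (b ^ i * a ^ (k - i))"
        unfolding p_def q_def cscale_power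
        by (simp add: cscale_mult_cscale cscale_of_real[symmetric] cscale_cscale field_simps)
      then show "p i * q (k - i) = cscale (z ^ k / fact k * ((-1) ^ (k - i) * of_nat (k choose (k - i)))) (b ^ i * a ^ (k - i))"
        using \<open>i \<in> {..k}\<close> by (simp add: binomial_term_eq)
    qed
    also have "\<dots> = (\<Sum>j\<le>k. cscale (z ^ k / fact k * ((-1) ^ j * of_nat (k choose j))) (b ^ (k - j) * a ^ j))"
      by (subst (2) atMost_atLeast0, subst sum.atLeastAtMost_rev) (auto intro!: sum.cong simp: atMost_atLeast0)
    also have "\<dots> = cscale (z ^ k / fact k) (Cpow_one b a k)"
      unfolding Cpow_one_def cscale_sum
      by (intro sum.cong refl) (simp add: cscale_of_real[symmetric] cscale_cscale)
    finally show ?thesis .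
  qed
  ultimately show ?thesis by simp
qed

definition bounded_cfunctional :: "('a::cstar_algebra_1 \<Rightarrow> complex) \<Rightarrow> bool" where
  "bounded_cfunctional \<psi> \<longleftrightarrow> bounded_linear \<psi> \<and> (\<forall>c x. \<psi> (cscale c x) = c * \<psi> x)"

lemma bounded_cfunctional_complexification:
  fixes \<phi> :: "'a::cstar_algebra_1 \<Rightarrow> real"
  assumes \<phi>: "linear \<phi>" "\<And>x. \<bar>\<phi> x\<bar> \<le> norm x"
  shows "bounded_cfunctional (\<lambda>x. complex_of_real (\<phi> x) - \<i> * complex_of_real (\<phi> (cscale \<i> x)))"
    (is "bounded_cfunctional ?\<psi>")
proof -
  have add: "?\<psi> (x + y) = ?\<psi> x + ?\<psi> y" for x y
    by (simp add: linear_add[OF \<phi>(1)] cscale_add_right algebra_simps)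
  have scale: "?\<psi> (r *\<^sub>R x) = of_real r * ?\<psi> x" for r x
    by (simp add: linear_scale[OF \<phi>(1)] cscale_scaleR algebra_simps)
  have "bounded_linear ?\<psi>"
  proof (rule bounded_linear_intro[where K=2])
    show "norm (?\<psi> x) \<le> norm x * 2" for x
    proof -
      have "norm (?\<psi> x) \<le> \<bar>\<phi> x\<bar> + \<bar>\<phi> (cscale \<i> x)\<bar>"
        using norm_triangle_ineq4 by (metis norm_ii norm_mult norm_of_real mult_1)
      also have "\<dots> \<le> norm x + norm (cscale \<i> x)" by (intro add_mono \<phi>(2))
      finally show ?thesis by (simp add: norm_cscale)
    qed
    show "?\<psi> (r *\<^sub>R x) = r *\<^sub>R ?\<psi> x" for r x
      unfolding scale by (simp add: scaleR_conv_of_real)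
  qed (rule add)
  moreover have "?\<psi> (cscale c x) = c * ?\<psi> x" for c x
  proof -
    have "cscale \<i> (cscale \<i> x) = (-1) *\<^sub>R x"
      using cscale_of_real[of "-1" x] by (simp add: cscale_cscale)
    then have i: "?\<psi> (cscale \<i> x) = \<i> * ?\<psi> x"
      by (simp add: linear_neg[OF \<phi>(1)] algebra_simps)
    have "cscale c x = Re c *\<^sub>R x + Im c *\<^sub>R cscale \<i> x"
      by (metis complex_eq cscale_add_left cscale_cscale cscale_of_real mult.commute)
    then have "?\<psi> (cscale c x) = of_real (Re c) * ?\<psi> x + of_real (Im c) * (\<i> * ?\<psi> x)"
      by (simp only: add scale i)
    also have "\<dots> = c * ?\<psi> x" by (simp add: complex_eq_iff)
    finally show ?thesis .
  qed
  ultimately show ?thesis unfolding bounded_cfunctional_def by blast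
qed

lemma bounded_cfunctional_separates:
  fixes d :: "'a::cstar_algebra_1"
  assumes "d \<noteq> 0"
  obtains \<psi> where "bounded_cfunctional \<psi>" "\<psi> d \<noteq> 0"
proof -
  obtain \<phi> :: "'a \<Rightarrow> real" where \<phi>: "linear \<phi>" "\<And>x. \<bar>\<phi> x\<bar> \<le> norm x" "\<phi> d = norm d"
    using norming_functional_exists by blast
  show thesis
  proof (rule that[OF bounded_cfunctional_complexification[OF \<phi>(1,2)]])
    show "complex_of_real (\<phi> d) - \<i> * complex_of_real (\<phi> (cscale \<i> d)) \<noteq> 0"
      using \<phi>(3) assms by (simp add: complex_eq_iff)
  qed
qed

section \<open>The entire function \<open>\<psi>(e\<^sup>z\<^sup>b e\<^sup>-\<^sup>z\<^sup>a)\<close>\<close>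

lemma power_series_entire:
  fixes c :: "nat \<Rightarrow> complex"
  assumes sums: "\<And>z. (\<lambda>n. c n * z ^ n) sums f z"
  shows "f holomorphic_on UNIV" "(f has_field_derivative c 1) (at 0)"
proof -
  have f: "f = (\<lambda>z. \<Sum>n. c n * z ^ n)" using sums sums_unique by blast
  have deriv: "(f has_field_derivative (\<Sum>n. diffs c n * z ^ n)) (at z)" for z
    unfolding f using sums by (intro termdiffs_strong_converges_everywhere) (blast intro: sums_summable)
  then show "f holomorphic_on UNIV"
    by (meson field_differentiable_at_within field_differentiable_def holomorphic_onI)
  show "(f has_field_derivative c 1) (at 0)"
    using deriv[of 0] by (simp add: diffs_def)
qed

lemma bounded_cfunctional_exp_mult_exp_sums:
  assumes "bounded_cfunctional \<psi>"
  shows "(\<lambda>n. \<psi> (Cpow_one b a n) / fact n * z ^ n) sums \<psi> (exp (cscale z b) * exp (cscale (- z) a))"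
proof -
  have "bounded_linear \<psi>" using assms by (simp add: bounded_cfunctional_def)
  from bounded_linear.sums[OF this exp_mult_exp_sums_Cpow_one]
  have "(\<lambda>n. \<psi> (cscale (z ^ n / fact n) (Cpow_one b a n))) sums \<psi> (exp (cscale z b) * exp (cscale (- z) a))" .
  then show ?thesis using assms by (simp add: bounded_cfunctional_def mult.commute)
qed

lemma exponential_type_zero_exp_mult_exp:
  fixes a b :: "'a::cstar_algebra_1"
  assumes "rho b a = 0" and \<psi>: "bounded_cfunctional \<psi>"
  shows "exponential_type_zero (\<lambda>z. \<psi> (exp (cscale z b) * exp (cscale (- z) a)))"
  unfolding exponential_type_zero_def
proof (intro allI impI)
  fix e :: real assume "0 < e"
  obtain K where K: "\<And>x. norm (\<psi> x) \<le> norm x * K" "0 < K"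
    using \<psi> unfolding bounded_cfunctional_def using bounded_linear.pos_bounded by blast
  obtain D where D: "\<And>n. norm (Cpow_one b a n) \<le> D * e ^ n"
    using geometric_bound_of_limsup_root_less[of "Cpow_one b a" e] assms(1) \<open>0 < e\<close>
    unfolding rho_def by auto
  have "norm (\<psi> (exp (cscale z b) * exp (cscale (- z) a))) \<le> (K * D) * exp (e * norm z)" for z
  proof -
    have term_le: "norm (\<psi> (Cpow_one b a n) / fact n * z ^ n) \<le> (K * D) * ((e * norm z) ^ n / fact n)" for n
    proof -
      have "norm (\<psi> (Cpow_one b a n) / fact n * z ^ n) = norm (\<psi> (Cpow_one b a n)) / fact n * norm z ^ n"
        by (simp add: norm_mult norm_divide norm_power)
      also have "\<dots> \<le> (D * e ^ n * K) / fact n * norm z ^ n"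
        using order_trans[OF K(1) mult_right_mono[OF D less_imp_le[OF K(2)]]]
        by (intro mult_right_mono divide_right_mono) auto
      also have "\<dots> = (K * D) * ((e * norm z) ^ n / fact n)"
        by (simp add: power_mult_distrib)
      finally show ?thesis .
    qed
    have exp_sums: "(\<lambda>n. (K * D) * ((e * norm z) ^ n / fact n)) sums ((K * D) * exp (e * norm z))"
      using sums_mult[OF exp_converges[of "e * norm z"], of "K * D"] by (simp add: divide_inverse mult.commute)
    show ?thesis
      using norm_sums_le[OF bounded_cfunctional_exp_mult_exp_sums[OF \<psi>] exp_sums term_le] .
  qed
  then show "\<exists>C. \<forall>z. norm (\<psi> (exp (cscale z b) * exp (cscale (- z) a))) \<le> C * exp (e * norm z)"
    by blast
qed

lemma norm_exp_adj_mult_exp_imag_le: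
  fixes a :: "'a::cstar_algebra_1"
  assumes M: "\<And>n::int. norm (exp (cscale (\<i> * of_int n) a)) \<le> M"
  shows "norm (exp (cscale (\<i> * of_real t) (adj a)) * exp (cscale (- (\<i> * of_real t)) a))
           \<le> (M * exp (norm a))\<^sup>2"
proof -
  define u where "u = exp (cscale (\<i> * of_real (- t)) a)"
  have "exp (cscale (\<i> * of_real t) (adj a)) = adj u"
    unfolding u_def by (simp add: adj_exp adj_cscale)
  then have "norm (exp (cscale (\<i> * of_real t) (adj a)) * exp (cscale (- (\<i> * of_real t)) a)) = (norm u)\<^sup>2"
    by (simp add: u_def cstar_identity)
  also have "\<dots> \<le> (M * exp (norm a))\<^sup>2"
    unfolding u_def by (intro power_mono norm_exp_imag_cscale_le[OF M]) simp
  finally show ?thesis .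
qed

lemma self_adjoint_if_rho_zero_and_exp_bounded:
  fixes a :: "'a::cstar_algebra_1"
  assumes rho: "rho (adj a) a = 0"
    and M: "\<And>n::int. norm (exp (cscale (\<i> * of_int n) a)) \<le> M"
  shows "adj a = a"
proof (rule ccontr)
  assume "adj a \<noteq> a"
  then obtain \<psi> where \<psi>: "bounded_cfunctional \<psi>" "\<psi> (adj a - a) \<noteq> 0"
    using bounded_cfunctional_separates[of "adj a - a"] by auto
  define g where "g z = \<psi> (exp (cscale z (adj a)) * exp (cscale (- z) a))" for z
  have sums: "(\<lambda>n. \<psi> (Cpow_one (adj a) a n) / fact n * z ^ n) sums g z" for z
    unfolding g_def by (rule bounded_cfunctional_exp_mult_exp_sums[OF \<psi>(1)])
  have g: "g holomorphic_on UNIV" "(g has_field_derivative \<psi> (adj a - a)) (at 0)"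
    using power_series_entire[OF sums] Cpow_one_1[of "adj a" a] by simp_all
  obtain K where K: "\<And>x. norm (\<psi> x) \<le> norm x * K" "0 < K"
    using \<psi>(1) unfolding bounded_cfunctional_def using bounded_linear.pos_bounded by blast
  have "(\<lambda>z. g (\<i> * z)) constant_on UNIV"
  proof (rule exponential_type_zero_bounded_on_real_line_constant)
    show "(\<lambda>z. g (\<i> * z)) holomorphic_on UNIV"
      by (rule holomorphic_on_compose_gen[unfolded o_def, OF _ g(1)]) (auto intro!: holomorphic_intros)
    show "exponential_type_zero (\<lambda>z. g (\<i> * z))"
      using exponential_type_zero_rotate[OF exponential_type_zero_exp_mult_exp[OF rho \<psi>(1)], of \<i>]
      by (simp add: g_def)
    show "norm (g (\<i> * of_real t)) \<le> (M * exp (norm a))\<^sup>2 * K" for t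
      unfolding g_def
      using order_trans[OF K(1) mult_right_mono[OF norm_exp_adj_mult_exp_imag_le[OF M] less_imp_le[OF K(2)]]] .
  qed
  then obtain c where c: "\<And>z. g (\<i> * z) = c" unfolding constant_on_def by blast
  have "g = (\<lambda>_. c)"
  proof
    fix z
    show "g z = c" using c[of "- \<i> * z"] by simp
  qed
  then have "(g has_field_derivative 0) (at 0)" by simp
  with g(2) have "\<psi> (adj a - a) = 0" by (rule DERIV_unique)
  with \<psi>(2) show False ..
qed

theorem mainTheorem13:
  fixes a :: "'a::cstar_algebra_1"
  shows "adj a = a \<longleftrightarrow>
    (rho (adj a) a = 0 \<and>
     bdd_above (range (\<lambda>n::int. norm (exp (cscale (\<i> * of_int n) a)))))"
proof
  assume "adj a = a"
  then have "norm (exp (cscale (\<i> * of_int n) a)) = 1" for n :: int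
    using norm_exp_imag_cscale_self_adjoint[of a "of_int n"] by simp
  then have "bdd_above (range (\<lambda>n::int. norm (exp (cscale (\<i> * of_int n) a))))"
    by (intro bdd_aboveI[where M=1]) auto
  moreover have "rho (adj a) a = 0" using \<open>adj a = a\<close> rho_same by metis
  ultimately show "rho (adj a) a = 0 \<and> bdd_above (range (\<lambda>n::int. norm (exp (cscale (\<i> * of_int n) a))))"
    by blast
next
  assume "rho (adj a) a = 0 \<and> bdd_above (range (\<lambda>n::int. norm (exp (cscale (\<i> * of_int n) a))))"
  then obtain M where "rho (adj a) a = 0" "\<And>n::int. norm (exp (cscale (\<i> * of_int n) a)) \<le> M"
    unfolding bdd_above_def by auto
  then show "adj a = a" by (rule self_adjoint_if_rho_zero_and_exp_bounded)
qed

end
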